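(* Suppose $\sigma$ is an automorphism of $D$ and $f\in D[t;\sigma,\delta]$ is monic of degree $m\ge2$ and irreducible. (i) If $D\subseteq\mathrm{Nuc}_r(S_f)$ then $S_f$ is a division algebra. (ii) If there is a subalgebra $B\subseteq D$ such that $B\subseteq\mathrm{Nuc}_r(S_f)$ and $D$ is free of finite rank as a right $B$-module, then $S_f$ is a division algebra.
   Context: $D$ is an associative division ring, $\sigma$ a ring endomorphism of $D$, $\delta$ a left $\sigma$-derivation. $D[t;\sigma,\delta]$ is the skew polynomial ring with $ta=\sigma(a)t+\delta(a)$. For monic $f$ of degree $m$, $S_f$ is the set of polynomials of degree $<m$ with multiplication $g\circ h=$ remainder of $gh$ upon right division by $f$; $D$ is identified with the constants. $\mathrm{Nuc}_r(S_f)=\{x: (yz)x=y(zx)\ \forall y,z\in S_f\}$. $f$ irreducible means not a unit and no factorization $f=gh$ with $\deg g,\deg h<\deg f$. $S_f$ is a division algebra if left and right multiplication by every nonzero element are bijective. *)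

theory Defs
  imports "HOL-Computational_Algebra.Polynomial"
begin

text \<open>Skew polynomials D[t;sigma,delta] are represented by their coefficient
  sequences (type 'a poly, used only as a container of coefficients; its
  commutative multiplication is NOT used). The coefficient of t^i is coeff p i,
  so p = sum_i (coeff p i) t^i with coefficients written on the left.\<close>

definition is_automorphism :: "('a::division_ring \<Rightarrow> 'a) \<Rightarrow> bool" where
  "is_automorphism \<sigma> \<longleftrightarrow> bij \<sigma> \<and> (\<forall>a b. \<sigma> (a + b) = \<sigma> a + \<sigma> b)
     \<and> (\<forall>a b. \<sigma> (a * b) = \<sigma> a * \<sigma> b) \<and> \<sigma> 1 = 1"

definition is_left_sigma_derivation :: "('a::division_ring \<Rightarrow> 'a) \<Rightarrow> ('a \<Rightarrow> 'a) \<Rightarrow> bool" where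
  "is_left_sigma_derivation \<sigma> \<delta> \<longleftrightarrow> (\<forall>a b. \<delta> (a + b) = \<delta> a + \<delta> b)
     \<and> (\<forall>a b. \<delta> (a * b) = \<sigma> a * \<delta> b + \<delta> a * b)"

text \<open>Left multiplication by t: t * (sum a_i t^i) = sum (sigma(a_i) t^(i+1) + delta(a_i) t^i).\<close>
definition skew_tmult :: "('a::division_ring \<Rightarrow> 'a) \<Rightarrow> ('a \<Rightarrow> 'a) \<Rightarrow> 'a poly \<Rightarrow> 'a poly" where
  "skew_tmult \<sigma> \<delta> p = pCons 0 (map_poly \<sigma> p) + map_poly \<delta> p"

definition const_lmult :: "'a::division_ring \<Rightarrow> 'a poly \<Rightarrow> 'a poly" where
  "const_lmult a p = map_poly (\<lambda>c. a * c) p"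

definition skew_mult :: "('a::division_ring \<Rightarrow> 'a) \<Rightarrow> ('a \<Rightarrow> 'a) \<Rightarrow> 'a poly \<Rightarrow> 'a poly \<Rightarrow> 'a poly" where
  "skew_mult \<sigma> \<delta> p q = (\<Sum>i\<le>degree p. const_lmult (coeff p i) ((skew_tmult \<sigma> \<delta> ^^ i) q))"

definition skew_unit :: "('a::division_ring \<Rightarrow> 'a) \<Rightarrow> ('a \<Rightarrow> 'a) \<Rightarrow> 'a poly \<Rightarrow> bool" where
  "skew_unit \<sigma> \<delta> f \<longleftrightarrow> (\<exists>g. skew_mult \<sigma> \<delta> g f = [:1:] \<and> skew_mult \<sigma> \<delta> f g = [:1:])"

definition skew_irreducible :: "('a::division_ring \<Rightarrow> 'a) \<Rightarrow> ('a \<Rightarrow> 'a) \<Rightarrow> 'a poly \<Rightarrow> bool" where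
  "skew_irreducible \<sigma> \<delta> f \<longleftrightarrow> \<not> skew_unit \<sigma> \<delta> f \<and>
     (\<forall>g h. f = skew_mult \<sigma> \<delta> g h \<longrightarrow> \<not> (degree g < degree f \<and> degree h < degree f))"

definition skew_rem :: "('a::division_ring \<Rightarrow> 'a) \<Rightarrow> ('a \<Rightarrow> 'a) \<Rightarrow> 'a poly \<Rightarrow> 'a poly \<Rightarrow> 'a poly" where
  "skew_rem \<sigma> \<delta> g f = (THE r. degree r < degree f \<and> (\<exists>q. g = skew_mult \<sigma> \<delta> q f + r))"

definition Sf :: "'a::division_ring poly \<Rightarrow> 'a poly set" where
  "Sf f = {g. degree g < degree f}"

definition Sf_mult :: "('a::division_ring \<Rightarrow> 'a) \<Rightarrow> ('a \<Rightarrow> 'a) \<Rightarrow> 'a poly \<Rightarrow> 'a poly \<Rightarrow> 'a poly \<Rightarrow> 'a poly" where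
  "Sf_mult \<sigma> \<delta> f g h = skew_rem \<sigma> \<delta> (skew_mult \<sigma> \<delta> g h) f"

definition Nuc_r :: "('a::division_ring \<Rightarrow> 'a) \<Rightarrow> ('a \<Rightarrow> 'a) \<Rightarrow> 'a poly \<Rightarrow> 'a poly set" where
  "Nuc_r \<sigma> \<delta> f = {x \<in> Sf f. \<forall>y\<in>Sf f. \<forall>z\<in>Sf f.
      Sf_mult \<sigma> \<delta> f (Sf_mult \<sigma> \<delta> f y z) x = Sf_mult \<sigma> \<delta> f y (Sf_mult \<sigma> \<delta> f z x)}"

definition Sf_division_algebra :: "('a::division_ring \<Rightarrow> 'a) \<Rightarrow> ('a \<Rightarrow> 'a) \<Rightarrow> 'a poly \<Rightarrow> bool" where
  "Sf_division_algebra \<sigma> \<delta> f \<longleftrightarrow> (\<forall>a\<in>Sf f. a \<noteq> 0 \<longrightarrow>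
      bij_betw (\<lambda>x. Sf_mult \<sigma> \<delta> f a x) (Sf f) (Sf f) \<and>
      bij_betw (\<lambda>x. Sf_mult \<sigma> \<delta> f x a) (Sf f) (Sf f))"

text \<open>The base field F = C(D) \<inter> Fix(sigma) \<inter> Const(delta) over which S_f is an algebra.\<close>
definition base_field :: "('a::division_ring \<Rightarrow> 'a) \<Rightarrow> ('a \<Rightarrow> 'a) \<Rightarrow> 'a set" where
  "base_field \<sigma> \<delta> = {c. (\<forall>d. c * d = d * c) \<and> \<sigma> c = c \<and> \<delta> c = 0}"

definition is_subalgebra :: "('a::division_ring \<Rightarrow> 'a) \<Rightarrow> ('a \<Rightarrow> 'a) \<Rightarrow> 'a set \<Rightarrow> bool" where
  "is_subalgebra \<sigma> \<delta> B \<longleftrightarrow> base_field \<sigma> \<delta> \<subseteq> B \<and> 1 \<in> B \<and>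
     (\<forall>x\<in>B. \<forall>y\<in>B. x + y \<in> B \<and> x * y \<in> B) \<and> (\<forall>x\<in>B. - x \<in> B)"

definition free_finite_right_module :: "'a::division_ring set \<Rightarrow> bool" where
  "free_finite_right_module B \<longleftrightarrow> (\<exists>(n::nat) (b::nat \<Rightarrow> 'a). \<forall>d. \<exists>!\<beta>::nat \<Rightarrow> 'a.
      (\<forall>i<n. \<beta> i \<in> B) \<and> (\<forall>i\<ge>n. \<beta> i = 0) \<and> d = (\<Sum>i<n. b i * \<beta> i))"

end

theory Submission
  imports Defs
begin

text \<open>
  S_f = D[t;\<sigma>,\<delta>]/D[t;\<sigma>,\<delta>]f is a left D-module of dimension deg f, and, since \<sigma> is onto and
  D is finite over B, a finitely generated right B-module. Right multiplication by a nonzero a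
  is left D-linear; by the nucleus hypothesis, left multiplication by a is right B-linear. Both
  are injective because irreducibility of f rules out zero divisors in S_f: if a b \<in> D[t]f with
  a, b of degree < deg f, then D[t]b + D[t]f = D[t] by irreducibility, so z \<mapsto> z b maps the
  polynomials of degree < deg a onto S_f, contradicting dim S_f = deg f. Finally, an injective
  linear endomorphism of a finitely generated module over a division ring is bijective
  (Steinitz exchange).
\<close>

section \<open>Modules over division rings\<close>

text \<open>The scalars form a subset K of a division ring, with multiplication mul; taking
  mul c d = d * c turns right modules into left modules over the opposite ring.\<close>
locale division_ring_module =
  fixes K :: "'a::division_ring set" and mul :: "'a \<Rightarrow> 'a \<Rightarrow> 'a"
    and scale :: "'a \<Rightarrow> 'v::ab_group_add \<Rightarrow> 'v"
  assumes one_in_K: "1 \<in> K"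
    and add_in_K: "c \<in> K \<Longrightarrow> d \<in> K \<Longrightarrow> c + d \<in> K"
    and uminus_in_K: "c \<in> K \<Longrightarrow> - c \<in> K"
    and mul_in_K: "c \<in> K \<Longrightarrow> d \<in> K \<Longrightarrow> mul c d \<in> K"
    and inverse_in_K: "c \<in> K \<Longrightarrow> inverse c \<in> K"
    and mul_inverse_left: "c \<noteq> 0 \<Longrightarrow> mul (inverse c) c = 1"
    and scale_left_distrib: "scale (c + d) v = scale c v + scale d v"
    and scale_right_distrib: "scale c (v + w) = scale c v + scale c w"
    and scale_scale: "scale c (scale d v) = scale (mul c d) v"
    and scale_one: "scale 1 v = v"
begin

lemma zero_in_K: "0 \<in> K"
  using add_in_K[OF one_in_K uminus_in_K[OF one_in_K]] by simp

lemma sum_in_K: "(\<And>i. i \<in> A \<Longrightarrow> c i \<in> K) \<Longrightarrow> sum c A \<in> K"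
  by (induction A rule: infinite_finite_induct) (auto simp: zero_in_K add_in_K)

lemma scale_zero_left [simp]: "scale 0 v = 0"
  using scale_left_distrib[of 0 0 v] by simp

lemma scale_zero_right [simp]: "scale c 0 = 0"
  using scale_right_distrib[of c 0 0] by simp

lemma scale_minus_left: "scale (- c) v = - scale c v"
  using scale_left_distrib[of c "- c" v] by (simp add: minus_unique)

lemma scale_minus_right: "scale c (- v) = - scale c v"
  using scale_right_distrib[of c v "- v"] by (simp add: minus_unique)

lemma scale_right_diff_distrib: "scale c (v - w) = scale c v - scale c w"
  using scale_right_distrib[of c v "- w"] by (simp add: scale_minus_right)

lemma scale_sum_left: "scale (\<Sum>i\<in>A. c i) v = (\<Sum>i\<in>A. scale (c i) v)"
  by (induction A rule: infinite_finite_induct) (auto simp: scale_left_distrib)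

lemma scale_sum_right: "scale c (\<Sum>i\<in>A. v i) = (\<Sum>i\<in>A. scale c (v i))"
  by (induction A rule: infinite_finite_induct) (auto simp: scale_right_distrib)

lemma scale_inverse_scale: "c \<noteq> 0 \<Longrightarrow> scale (inverse c) (scale c v) = v"
  by (simp add: scale_scale mul_inverse_left scale_one)

definition span :: "'i set \<Rightarrow> ('i \<Rightarrow> 'v) \<Rightarrow> 'v set" where
  "span I u = {\<Sum>i\<in>I. scale (c i) (u i) | c. \<forall>i\<in>I. c i \<in> K}"

definition independent :: "'i set \<Rightarrow> ('i \<Rightarrow> 'v) \<Rightarrow> bool" where
  "independent I u \<longleftrightarrow>
     (\<forall>c. (\<forall>i\<in>I. c i \<in> K) \<and> (\<Sum>i\<in>I. scale (c i) (u i)) = 0 \<longrightarrow> (\<forall>i\<in>I. c i = 0))"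

definition subspace :: "'v set \<Rightarrow> bool" where
  "subspace V \<longleftrightarrow> 0 \<in> V \<and> (\<forall>x\<in>V. \<forall>y\<in>V. x + y \<in> V) \<and> (\<forall>c\<in>K. \<forall>x\<in>V. scale c x \<in> V)"

definition linear_on :: "'v set \<Rightarrow> ('v \<Rightarrow> 'v) \<Rightarrow> bool" where
  "linear_on V L \<longleftrightarrow> (\<forall>x\<in>V. \<forall>y\<in>V. L (x + y) = L x + L y) \<and> (\<forall>c\<in>K. \<forall>x\<in>V. L (scale c x) = scale c (L x))"

lemma spanI: "(\<And>i. i \<in> I \<Longrightarrow> c i \<in> K) \<Longrightarrow> (\<Sum>i\<in>I. scale (c i) (u i)) \<in> span I u"
  unfolding span_def by blast

lemma spanE:
  assumes "x \<in> span I u"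
  obtains c where "\<And>i. i \<in> I \<Longrightarrow> c i \<in> K" "x = (\<Sum>i\<in>I. scale (c i) (u i))"
  using assms unfolding span_def by blast

lemma subspace_scale: "subspace V \<Longrightarrow> c \<in> K \<Longrightarrow> x \<in> V \<Longrightarrow> scale c x \<in> V"
  unfolding subspace_def by blast

lemma subspace_minus: "subspace V \<Longrightarrow> x \<in> V \<Longrightarrow> - x \<in> V"
  unfolding subspace_def using scale_minus_left[of 1 x] by (metis one_in_K scale_one uminus_in_K)

lemma subspace_diff: "subspace V \<Longrightarrow> x \<in> V \<Longrightarrow> y \<in> V \<Longrightarrow> x - y \<in> V"
  using subspace_minus[of V y] unfolding subspace_def diff_conv_add_uminus by blast

lemma subspace_sum: "subspace V \<Longrightarrow> (\<And>i. i \<in> A \<Longrightarrow> v i \<in> V) \<Longrightarrow> sum v A \<in> V"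
  unfolding subspace_def by (induction A rule: infinite_finite_induct) auto

lemma linear_on_zero: "linear_on V L \<Longrightarrow> subspace V \<Longrightarrow> L 0 = 0"
  unfolding linear_on_def subspace_def by (metis add_0_right add_left_imp_eq)

lemma linear_on_sum:
  "linear_on V L \<Longrightarrow> subspace V \<Longrightarrow> (\<And>i. i \<in> A \<Longrightarrow> v i \<in> V) \<Longrightarrow> L (sum v A) = (\<Sum>i\<in>A. L (v i))"
  by (induction A rule: infinite_finite_induct) (auto simp: linear_on_zero linear_on_def subspace_sum)

lemma subspace_span: "subspace (span I u)"
  unfolding subspace_def
proof (intro conjI ballI)
  show "0 \<in> span I u"
    using spanI[of I "\<lambda>_. 0" u] zero_in_K by simp
  fix x y assume "x \<in> span I u" "y \<in> span I u"
  then obtain a b where "\<And>i. i \<in> I \<Longrightarrow> a i \<in> K" "x = (\<Sum>i\<in>I. scale (a i) (u i))"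
    and "\<And>i. i \<in> I \<Longrightarrow> b i \<in> K" "y = (\<Sum>i\<in>I. scale (b i) (u i))"
    by (auto elim!: spanE)
  then show "x + y \<in> span I u"
    using spanI[of I "\<lambda>i. a i + b i" u] by (simp add: add_in_K scale_left_distrib sum.distrib)
next
  fix c x assume "c \<in> K" "x \<in> span I u"
  then obtain a where "\<And>i. i \<in> I \<Longrightarrow> a i \<in> K" "x = (\<Sum>i\<in>I. scale (a i) (u i))"
    by (auto elim!: spanE)
  then show "scale c x \<in> span I u"
    using spanI[of I "\<lambda>i. mul c (a i)" u] \<open>c \<in> K\<close> by (simp add: mul_in_K scale_sum_right scale_scale)
qed

lemma span_insert:
  assumes "finite I" "x \<notin> I" "w \<in> span (insert x I) u"
  obtains c where "c \<in> K" "w - scale c (u x) \<in> span I u"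
proof -
  obtain a where "\<And>i. i \<in> insert x I \<Longrightarrow> a i \<in> K" "w = (\<Sum>i\<in>insert x I. scale (a i) (u i))"
    using assms(3) by (auto elim!: spanE)
  then have "a x \<in> K" "w - scale (a x) (u x) \<in> span I u"
    using assms(1,2) by (auto intro: spanI)
  then show thesis by (rule that)
qed

lemma independent_diff_multiples:
  assumes "finite J" "independent J w" "k \<in> J" "\<And>j. j \<in> J \<Longrightarrow> a j \<in> K"
  shows "independent (J - {k}) (\<lambda>j. w j - scale (a j) (w k))"
  unfolding independent_def
proof (intro allI impI ballI)
  fix c j
  assume c: "(\<forall>j\<in>J - {k}. c j \<in> K) \<and> (\<Sum>j\<in>J - {k}. scale (c j) (w j - scale (a j) (w k))) = 0"
    and j: "j \<in> J - {k}"
  define s where "s = (\<Sum>j\<in>J - {k}. mul (c j) (a j))"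
  have "(\<Sum>j\<in>J - {k}. scale (c j) (w j - scale (a j) (w k))) = (\<Sum>j\<in>J - {k}. scale (c j) (w j)) - scale s (w k)"
    by (simp add: s_def scale_right_diff_distrib scale_scale scale_sum_left sum_subtractf)
  also have "\<dots> = (\<Sum>j\<in>J. scale ((c(k := - s)) j) (w j))"
  proof -
    have "(\<Sum>j\<in>J - {k}. scale ((c(k := - s)) j) (w j)) = (\<Sum>j\<in>J - {k}. scale (c j) (w j))"
      by (rule sum.cong) auto
    then show ?thesis
      using assms(1,3) by (subst sum.remove) (auto simp: scale_minus_left)
  qed
  finally have "(\<Sum>j\<in>J. scale ((c(k := - s)) j) (w j)) = 0" using c by simp
  moreover have "s \<in> K"
    using c assms(4) unfolding s_def by (auto intro!: sum_in_K mul_in_K)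
  then have "\<forall>i\<in>J. (c(k := - s)) i \<in> K" using c uminus_in_K by auto
  ultimately have "\<forall>i\<in>J. (c(k := - s)) i = 0"
    using assms(2) unfolding independent_def by blast
  then show "c j = 0" using j by auto
qed

text \<open>Steinitz exchange: in the inductive step, some w k involving u x serves as pivot to
  eliminate u x from all the other w j.\<close>
lemma independent_card_le_span:
  assumes "finite I" "finite J" "w ` J \<subseteq> span I u" "independent J w"
  shows "card J \<le> card I"
  using assms
proof (induction I arbitrary: J w rule: finite_induct)
  case empty
  then have "w j = 0" if "j \<in> J" for j
    using that by (auto simp: span_def)
  then have "\<forall>j\<in>J. (1::'a) = 0"
    using spec[OF empty.prems(3)[unfolded independent_def], of "\<lambda>_. 1"] one_in_K by simp
  then show ?case by (auto simp: card_eq_0_iff)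
next
  case (insert x I)
  have "\<exists>c. c \<in> K \<and> w j - scale c (u x) \<in> span I u" if "j \<in> J" for j
    using insert.hyps insert.prems(2) that by (metis image_subset_iff span_insert)
  then obtain C where C: "\<And>j. j \<in> J \<Longrightarrow> C j \<in> K" "\<And>j. j \<in> J \<Longrightarrow> w j - scale (C j) (u x) \<in> span I u"
    by metis
  show ?case
  proof (cases "\<forall>j\<in>J. C j = 0")
    case True
    then have "w ` J \<subseteq> span I u" using C(2) by auto
    then show ?thesis using insert by (simp add: le_SucI)
  next
    case False
    then obtain k where k: "k \<in> J" "C k \<noteq> 0" by blast
    define a where "a j = mul (C j) (inverse (C k))" for j
    have a_in_K: "a j \<in> K" if "j \<in> J" for j
      using that k(1) C(1) by (simp add: a_def mul_in_K inverse_in_K)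
    have "w j - scale (a j) (w k) \<in> span I u" if "j \<in> J" for j
    proof -
      have "w j - scale (a j) (w k) = (w j - scale (C j) (u x)) - scale (a j) (w k - scale (C k) (u x))"
        using k(2) by (simp add: a_def scale_right_diff_distrib scale_scale[symmetric] scale_inverse_scale)
      also have "\<dots> \<in> span I u"
        by (rule subspace_diff[OF subspace_span C(2)[OF that]
              subspace_scale[OF subspace_span a_in_K[OF that] C(2)[OF k(1)]]])
      finally show ?thesis .
    qed
    moreover have "independent (J - {k}) (\<lambda>j. w j - scale (a j) (w k))"
      using insert.prems(1,3) k(1) a_in_K by (rule independent_diff_multiples)
    ultimately have "card (J - {k}) \<le> card I"
      using insert.prems(1) by (intro insert.IH) auto
    then show ?thesis using insert.hyps k(1) insert.prems(1) by (simp add: card_Diff_singleton)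
  qed
qed

lemma span_remove:
  assumes "finite I" "k \<in> I" "u k \<in> span (I - {k}) u"
  shows "span I u \<subseteq> span (I - {k}) u"
proof
  fix x assume "x \<in> span I u"
  then obtain a where a: "\<And>i. i \<in> I \<Longrightarrow> a i \<in> K" "x = (\<Sum>i\<in>I. scale (a i) (u i))"
    by (auto elim!: spanE)
  obtain b where b: "\<And>i. i \<in> I - {k} \<Longrightarrow> b i \<in> K" "u k = (\<Sum>i\<in>I - {k}. scale (b i) (u i))"
    using assms(3) by (auto elim!: spanE)
  have "x = scale (a k) (u k) + (\<Sum>i\<in>I - {k}. scale (a i) (u i))"
    using a(2) assms(1,2) by (simp add: sum.remove)
  also have "\<dots> = (\<Sum>i\<in>I - {k}. scale (mul (a k) (b i) + a i) (u i))"
    by (simp add: b(2) scale_sum_right scale_scale scale_left_distrib sum.distrib)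
  finally show "x \<in> span (I - {k}) u"
    using a(1) b(1) assms(2) by (auto intro!: spanI add_in_K mul_in_K)
qed

lemma exists_independent_spanning_subset:
  assumes "finite I" "V \<subseteq> span I u"
  obtains I' where "I' \<subseteq> I" "V \<subseteq> span I' u" "independent I' u"
proof -
  obtain I' where I': "I' \<subseteq> I" "V \<subseteq> span I' u"
    and minimal: "\<And>I''. I'' \<subseteq> I \<Longrightarrow> V \<subseteq> span I'' u \<Longrightarrow> card I' \<le> card I''"
    using ex_has_least_nat[of "\<lambda>I'. I' \<subseteq> I \<and> V \<subseteq> span I' u" I card] assms(2) by auto
  have "finite I'" using I'(1) assms(1) by (rule finite_subset)
  have "independent I' u"
    unfolding independent_def
  proof (intro allI impI ballI)
    fix c k
    assume c: "(\<forall>i\<in>I'. c i \<in> K) \<and> (\<Sum>i\<in>I'. scale (c i) (u i)) = 0" and "k \<in> I'"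
    show "c k = 0"
    proof (rule ccontr)
    assume "c k \<noteq> 0"
    note k = \<open>k \<in> I'\<close> this
    have "0 = scale (c k) (u k) + (\<Sum>i\<in>I' - {k}. scale (c i) (u i))"
      using c k(1) \<open>finite I'\<close> by (simp add: sum.remove)
    then have "u k = scale (inverse (c k)) (- (\<Sum>i\<in>I' - {k}. scale (c i) (u i)))"
      using k(2) by (metis add.commute add_eq_0_iff2 scale_inverse_scale)
    also have "\<dots> = (\<Sum>i\<in>I' - {k}. scale (mul (inverse (c k)) (- c i)) (u i))"
      by (simp add: scale_minus_right scale_sum_right scale_scale[symmetric] scale_minus_left sum_negf)
    finally have "u k \<in> span (I' - {k}) u"
      using c k(1) by (auto intro!: spanI mul_in_K inverse_in_K uminus_in_K)
    then have "V \<subseteq> span (I' - {k}) u"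
      using span_remove[OF \<open>finite I'\<close> k(1)] I'(2) by blast
    then have "card I' \<le> card (I' - {k})"
      using minimal I'(1) by blast
    then show False
      using \<open>finite I'\<close> k(1) card_Diff1_less[of I' k] by simp
    qed
  qed
  with I' show thesis by (rule that)
qed

lemma linear_on_diff:
  assumes "linear_on V L" "subspace V" "x \<in> V" "y \<in> V"
  shows "L (x - y) = L x - L y"
proof -
  have "- y \<in> V" using assms(2,4) by (rule subspace_minus)
  then have "L (x + - y) = L x + L (- y)" "L (y + - y) = L y + L (- y)"
    using assms unfolding linear_on_def by blast+
  then show ?thesis
    using linear_on_zero[OF assms(1,2)] by (simp add: minus_unique)
qed

lemma linear_on_lincomb:
  assumes "subspace V" "linear_on V L" "\<And>i. i \<in> I \<Longrightarrow> c i \<in> K" "u ` I \<subseteq> V"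
  shows "L (\<Sum>i\<in>I. scale (c i) (u i)) = (\<Sum>i\<in>I. scale (c i) (L (u i)))"
proof -
  have "L (scale (c i) (u i)) = scale (c i) (L (u i))" if "i \<in> I" for i
    using assms that unfolding linear_on_def by blast
  then show ?thesis
    using assms by (simp add: linear_on_sum subspace_scale image_subset_iff)
qed

lemma independent_linear_image:
  assumes "subspace V" "linear_on V L" "\<And>x. x \<in> V \<Longrightarrow> L x = 0 \<Longrightarrow> x = 0"
    and "u ` I \<subseteq> V" "independent I u"
  shows "independent I (\<lambda>i. L (u i))"
  unfolding independent_def
proof (intro allI impI)
  fix c assume c: "(\<forall>i\<in>I. c i \<in> K) \<and> (\<Sum>i\<in>I. scale (c i) (L (u i))) = 0"
  then have "(\<Sum>i\<in>I. scale (c i) (u i)) \<in> V"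
    using assms(1,4) by (auto intro!: subspace_sum subspace_scale)
  moreover have "L (\<Sum>i\<in>I. scale (c i) (u i)) = 0"
    using c assms(1,2,4) by (simp add: linear_on_lincomb)
  ultimately have "(\<Sum>i\<in>I. scale (c i) (u i)) = 0" by (rule assms(3))
  then show "\<forall>i\<in>I. c i = 0" using assms(5) c unfolding independent_def by blast
qed

text \<open>Adjoining w to v gives card I + 1 vectors in span I u; they are dependent, and since v is
  independent, w occurs in the dependence.\<close>
lemma independent_spans:
  assumes "finite I" "V \<subseteq> span I u" "independent I v" "v ` I \<subseteq> V"
  shows "V \<subseteq> span I v"
proof
  fix w assume "w \<in> V"
  define J where "J = insert None (Some ` I)"
  define z where "z j = (case j of None \<Rightarrow> w | Some i \<Rightarrow> v i)" for j
  have J: "finite J" "card I < card J"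
    using assms(1) by (auto simp: J_def card_insert_if card_image)
  have "z ` J \<subseteq> V" using \<open>w \<in> V\<close> assms(4) by (auto simp: J_def z_def)
  then have "z ` J \<subseteq> span I u" using assms(2) by blast
  then have "\<not> independent J z"
    using independent_card_le_span[OF assms(1) J(1)] J(2) by (meson not_le)
  then obtain c where c: "\<forall>j\<in>J. c j \<in> K" "(\<Sum>j\<in>J. scale (c j) (z j)) = 0" and "\<exists>j\<in>J. c j \<noteq> 0"
    unfolding independent_def by blast
  have c_Some: "\<forall>i\<in>I. c (Some i) \<in> K" using c(1) by (simp add: J_def)
  have sum: "scale (c None) w + (\<Sum>i\<in>I. scale (c (Some i)) (v i)) = 0"
    using c(2) assms(1) by (simp add: J_def z_def sum.reindex)
  have "c None \<noteq> 0"
  proof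
    assume "c None = 0"
    then have "\<forall>i\<in>I. c (Some i) = 0"
      using spec[OF assms(3)[unfolded independent_def], of "\<lambda>i. c (Some i)"] c_Some sum by simp
    with \<open>c None = 0\<close> \<open>\<exists>j\<in>J. c j \<noteq> 0\<close> show False by (auto simp: J_def)
  qed
  then have "w = scale (inverse (c None)) (- (\<Sum>i\<in>I. scale (c (Some i)) (v i)))"
    using sum by (metis add.commute add_eq_0_iff2 scale_inverse_scale)
  also have "\<dots> = (\<Sum>i\<in>I. scale (mul (inverse (c None)) (- c (Some i))) (v i))"
    by (simp add: scale_minus_right scale_sum_right scale_scale[symmetric] scale_minus_left sum_negf)
  finally show "w \<in> span I v"
    using c(1) c_Some by (auto simp: J_def intro!: spanI mul_in_K inverse_in_K uminus_in_K)
qed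

theorem injective_endomorphism_bij:
  assumes "finite I" "subspace V" "u ` I \<subseteq> V" "V \<subseteq> span I u"
    and "linear_on V L" "L ` V \<subseteq> V" and injective: "\<And>x. x \<in> V \<Longrightarrow> L x = 0 \<Longrightarrow> x = 0"
  shows "bij_betw L V V"
proof -
  obtain I' where I': "I' \<subseteq> I" "V \<subseteq> span I' u" "independent I' u"
    by (rule exists_independent_spanning_subset[OF assms(1,4)])
  have "finite I'" using I'(1) assms(1) by (rule finite_subset)
  have uV: "u ` I' \<subseteq> V" using I'(1) assms(3) by blast
  have spans: "V \<subseteq> span I' (\<lambda>i. L (u i))"
    using independent_linear_image[OF assms(2,5) injective uV I'(3)] uV assms(6)
    by (intro independent_spans[OF \<open>finite I'\<close> I'(2)]) auto
  have "V \<subseteq> L ` V"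
  proof
    fix w assume "w \<in> V"
    then obtain c where c: "\<And>i. i \<in> I' \<Longrightarrow> c i \<in> K" "w = (\<Sum>i\<in>I'. scale (c i) (L (u i)))"
      using spans by (auto elim!: spanE)
    then have "w = L (\<Sum>i\<in>I'. scale (c i) (u i))"
      using assms(2,5) uV by (simp add: linear_on_lincomb)
    moreover have "(\<Sum>i\<in>I'. scale (c i) (u i)) \<in> V"
      using c(1) uV assms(2) by (auto intro!: subspace_sum subspace_scale)
    ultimately show "w \<in> L ` V" by blast
  qed
  moreover have "inj_on L V"
  proof (rule inj_onI)
    fix x y assume "x \<in> V" "y \<in> V" "L x = L y"
    then have "x - y \<in> V" "L (x - y) = 0"
      using assms(2) linear_on_diff[OF assms(5,2)] by (simp_all add: subspace_diff)
    then have "x - y = 0" by (rule injective)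
    then show "x = y" by simp
  qed
  ultimately show ?thesis using assms(6) by (auto simp: bij_betw_def)
qed

end

definition division_subring :: "'a::division_ring set \<Rightarrow> bool" where
  "division_subring B \<longleftrightarrow> 1 \<in> B \<and> (\<forall>x\<in>B. \<forall>y\<in>B. x + y \<in> B \<and> x * y \<in> B)
     \<and> (\<forall>x\<in>B. - x \<in> B \<and> inverse x \<in> B)"

lemma free_finite_right_module_UNIV: "free_finite_right_module (UNIV :: 'a::division_ring set)"
  unfolding free_finite_right_module_def
proof (intro exI[of _ "1::nat"] exI[of _ "\<lambda>_. 1"] allI)
  fix d :: 'a
  show "\<exists>!\<beta> :: nat \<Rightarrow> 'a. (\<forall>i<1. \<beta> i \<in> UNIV) \<and> (\<forall>i\<ge>1. \<beta> i = 0) \<and> d = (\<Sum>i<1. 1 * \<beta> i)"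
    by (rule ex1I[of _ "\<lambda>i. if i = 0 then d else 0"]) (auto simp: fun_eq_iff)
qed

text \<open>Uniqueness of coordinates forces inverses into B: the coordinates of e_0 b^-1, multiplied
  by b, are those of e_0.\<close>
lemma division_subring_if_free_finite_right_module:
  assumes "1 \<in> B" "\<forall>x\<in>B. \<forall>y\<in>B. x + y \<in> B \<and> x * y \<in> B" "\<forall>x\<in>B. - x \<in> B"
    and "free_finite_right_module B"
  shows "division_subring B"
proof -
  obtain n and e :: "nat \<Rightarrow> 'a" where coords:
    "\<And>d. \<exists>!\<beta>. (\<forall>i<n. \<beta> i \<in> B) \<and> (\<forall>i\<ge>n. \<beta> i = 0) \<and> d = (\<Sum>i<n. e i * \<beta> i)"
    using assms(4) unfolding free_finite_right_module_def by blast
  have "0 < n"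
    using coords[of 1] by (auto intro: gr0I)
  have "0 \<in> B" using assms(1-3) by (metis add.right_inverse)
  have "inverse b \<in> B" if b: "b \<in> B" "b \<noteq> 0" for b
  proof -
    define Q where "Q \<beta> \<longleftrightarrow> (\<forall>i<n. \<beta> i \<in> B) \<and> (\<forall>i\<ge>n. \<beta> i = 0) \<and> e 0 = (\<Sum>i<n. e i * \<beta> i)" for \<beta>
    obtain \<gamma> where \<gamma>: "\<forall>i<n. \<gamma> i \<in> B" "\<forall>i\<ge>n. \<gamma> i = 0" "e 0 * inverse b = (\<Sum>i<n. e i * \<gamma> i)"
      using coords[of "e 0 * inverse b"] by blast
    have "(\<Sum>i<n. e i * (\<gamma> i * b)) = (\<Sum>i<n. e i * \<gamma> i) * b"
      by (simp add: sum_distrib_right mult.assoc)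
    also have "\<dots> = e 0"
      using b(2) by (simp add: mult.assoc flip: \<gamma>(3))
    finally have "Q (\<lambda>i. \<gamma> i * b)"
      using \<gamma>(1,2) b(1) assms(2) by (simp add: Q_def)
    moreover have "Q (\<lambda>i. if i = 0 then 1 else 0)"
      using \<open>0 < n\<close> \<open>0 \<in> B\<close> assms(1) by (simp add: Q_def if_distrib cong: if_cong)
    moreover have "\<exists>!\<beta>. Q \<beta>"
      unfolding Q_def by (rule coords)
    ultimately have "(\<lambda>i. \<gamma> i * b) = (\<lambda>i. if i = 0 then 1 else 0)"
      by (metis the1_equality)
    then have "\<gamma> 0 * b = 1" by (metis (mono_tags))
    then have "\<gamma> 0 = inverse b" by (metis inverse_unique inverse_inverse_eq)
    then show ?thesis using \<gamma>(1) \<open>0 < n\<close> by auto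
  qed
  then have "inverse b \<in> B" if "b \<in> B" for b
    using that \<open>0 \<in> B\<close> by (cases "b = 0") auto
  then show ?thesis using assms(1-3) by (auto simp: division_subring_def)
qed

section \<open>Polynomials as a left module over their coefficients\<close>

lemma coeff_const_lmult [simp]: "coeff (const_lmult c p) n = c * coeff p n"
  unfolding const_lmult_def by (simp add: coeff_map_poly)

lemma const_lmult_add_right: "const_lmult c (p + q) = const_lmult c p + const_lmult c q"
  by (rule poly_eqI) (simp add: distrib_left)

lemma const_lmult_add_left: "const_lmult (c + d) p = const_lmult c p + const_lmult d p"
  by (rule poly_eqI) (simp add: distrib_right)

lemma const_lmult_const_lmult: "const_lmult c (const_lmult d p) = const_lmult (c * d) p"
  by (rule poly_eqI) (simp add: mult.assoc)

lemma const_lmult_one [simp]: "const_lmult 1 p = p"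
  by (rule poly_eqI) simp

lemma const_lmult_zero_left [simp]: "const_lmult 0 p = 0"
  by (rule poly_eqI) simp

lemma const_lmult_zero_right [simp]: "const_lmult c 0 = 0"
  by (rule poly_eqI) simp

lemma const_lmult_sum_right: "const_lmult c (\<Sum>i\<in>A. p i) = (\<Sum>i\<in>A. const_lmult c (p i))"
  by (induction A rule: infinite_finite_induct) (auto simp: const_lmult_add_right)

lemma degree_const_lmult_le: "degree (const_lmult c p) \<le> degree p"
  by (rule degree_le) (simp add: coeff_eq_0)

lemma const_lmult_monom: "const_lmult c (monom d n) = monom (c * d) n"
  by (rule poly_eqI) simp

lemma const_lmult_const: "const_lmult c [:d:] = [:c * d:]"
  by (rule poly_eqI) (simp add: coeff_pCons split: nat.split)

lemma degree_diff_less_if_lead_coeff_eq: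
  fixes p q :: "'a::ab_group_add poly"
  assumes "degree p = degree q" "lead_coeff p = lead_coeff q" "0 < degree p"
  shows "degree (p - q) < degree p"
proof (rule ccontr)
  assume "\<not> ?thesis"
  then have "degree (p - q) = degree p"
    using degree_diff_le_max[of p q] assms(1) by simp
  moreover have "coeff (p - q) (degree p) = 0" using assms(1,2) by simp
  ultimately have "p - q = 0" by (metis leading_coeff_0_iff)
  then show False using assms \<open>degree (p - q) = degree p\<close> by simp
qed

lemma monic_degree_0: "lead_coeff p = 1 \<Longrightarrow> degree p = 0 \<Longrightarrow> p = [:1:]"
  by (metis degree_eq_zeroE lead_coeff_pCons(2) degree_pCons_0)

lemma division_ring_module_const_lmult:
  "division_ring_module (UNIV :: 'a::division_ring set) (*) (const_lmult :: 'a \<Rightarrow> 'a poly \<Rightarrow> 'a poly)"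
  by unfold_locales (auto simp: const_lmult_add_left const_lmult_add_right const_lmult_const_lmult)

interpretation left_module: division_ring_module "UNIV :: 'a::division_ring set" "(*)" const_lmult
  by (rule division_ring_module_const_lmult)

lemma left_module_span_monomials:
  "degree p < n \<Longrightarrow> p \<in> left_module.span {..<n} (\<lambda>i. monom 1 i)"
proof -
  assume "degree p < n"
  then have "p = (\<Sum>i<n. const_lmult (coeff p i) (monom 1 i))"
    by (intro poly_eqI) (auto simp: coeff_sum const_lmult_monom coeff_eq_0 cong: if_cong)
  also have "\<dots> \<in> left_module.span {..<n} (\<lambda>i. monom 1 i)"
    by (rule left_module.spanI) simp
  finally show ?thesis .
qed

lemma left_module_independent_monomials: "left_module.independent {..<n} (\<lambda>i. monom 1 i)"
  unfolding left_module.independent_def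
proof (intro allI impI ballI)
  fix c :: "nat \<Rightarrow> 'a" and j
  assume "(\<forall>i\<in>{..<n}. c i \<in> UNIV) \<and> (\<Sum>i<n. const_lmult (c i) (monom 1 i)) = 0" and "j \<in> {..<n}"
  then have "coeff (\<Sum>i<n. const_lmult (c i) (monom 1 i)) j = 0" by simp
  then show "c j = 0" using \<open>j \<in> {..<n}\<close> by (simp add: coeff_sum const_lmult_monom)
qed

lemma degree_less_not_spanned:
  assumes "d < n"
  shows "\<not> {p :: 'a::division_ring poly. degree p < n} \<subseteq> left_module.span {..<d} w"
proof
  assume "{p. degree p < n} \<subseteq> left_module.span {..<d} w"
  then have "(\<lambda>i. monom (1::'a) i) ` {..<n} \<subseteq> left_module.span {..<d} w"
    by (auto simp: degree_monom_eq)
  then have "card {..<n} \<le> card {..<d}"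
    using left_module.independent_card_le_span left_module_independent_monomials by blast
  with assms show False by simp
qed

section \<open>Skew polynomial arithmetic\<close>

locale skew_poly_ring =
  fixes \<sigma> \<delta> :: "'a::division_ring \<Rightarrow> 'a"
  assumes sigma_add: "\<sigma> (a + b) = \<sigma> a + \<sigma> b"
    and sigma_mult: "\<sigma> (a * b) = \<sigma> a * \<sigma> b"
    and sigma_one [simp]: "\<sigma> 1 = 1"
    and delta_add: "\<delta> (a + b) = \<delta> a + \<delta> b"
    and delta_mult: "\<delta> (a * b) = \<sigma> a * \<delta> b + \<delta> a * b"
begin

abbreviation skew_times :: "'a poly \<Rightarrow> 'a poly \<Rightarrow> 'a poly"  (infixl "\<star>" 70)
  where "p \<star> q \<equiv> skew_mult \<sigma> \<delta> p q"

abbreviation tmult :: "'a poly \<Rightarrow> 'a poly"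
  where "tmult \<equiv> skew_tmult \<sigma> \<delta>"

lemma sigma_zero [simp]: "\<sigma> 0 = 0"
  using sigma_add[of 0 0] by simp

lemma sigma_eq_0_iff [simp]: "\<sigma> a = 0 \<longleftrightarrow> a = 0"
proof
  assume "\<sigma> a = 0"
  show "a = 0"
  proof (rule ccontr)
    assume "a \<noteq> 0"
    then have "\<sigma> a * \<sigma> (inverse a) = 1" by (simp flip: sigma_mult)
    with \<open>\<sigma> a = 0\<close> show False by simp
  qed
qed simp

lemma sigma_pow_eq_0_iff [simp]: "(\<sigma> ^^ k) a = 0 \<longleftrightarrow> a = 0"
  by (induction k) auto

lemma delta_zero [simp]: "\<delta> 0 = 0"
  using delta_add[of 0 0] by simp

lemma delta_one [simp]: "\<delta> 1 = 0"
  using delta_mult[of 1 1] by simp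

lemma sigma_pow_one [simp]: "(\<sigma> ^^ k) 1 = 1"
  by (induction k) auto

lemma coeff_tmult_0: "coeff (tmult p) 0 = \<delta> (coeff p 0)"
  unfolding skew_tmult_def by (simp add: coeff_map_poly)

lemma coeff_tmult_Suc: "coeff (tmult p) (Suc n) = \<sigma> (coeff p n) + \<delta> (coeff p (Suc n))"
  unfolding skew_tmult_def by (simp add: coeff_map_poly)

lemma tmult_add: "tmult (p + q) = tmult p + tmult q"
  by (rule poly_eqI, case_tac n) (simp_all add: coeff_tmult_0 coeff_tmult_Suc sigma_add delta_add algebra_simps)

lemma tmult_zero [simp]: "tmult 0 = 0"
  by (rule poly_eqI, case_tac n) (simp_all add: coeff_tmult_0 coeff_tmult_Suc)

lemma tmult_sum: "tmult (\<Sum>i\<in>A. p i) = (\<Sum>i\<in>A. tmult (p i))"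
  by (induction A rule: infinite_finite_induct) (auto simp: tmult_add)

lemma tmult_pow_add: "(tmult ^^ i) (p + q) = (tmult ^^ i) p + (tmult ^^ i) q"
  by (induction i) (auto simp: tmult_add)

lemma tmult_pow_zero [simp]: "(tmult ^^ i) 0 = 0"
  by (induction i) auto

lemma tmult_pow_sum: "(tmult ^^ i) (\<Sum>x\<in>A. p x) = (\<Sum>x\<in>A. (tmult ^^ i) (p x))"
  by (induction A rule: infinite_finite_induct) (auto simp: tmult_pow_add)

lemma tmult_const_lmult: "tmult (const_lmult c p) = const_lmult (\<sigma> c) (tmult p) + const_lmult (\<delta> c) p"
  by (rule poly_eqI, case_tac n)
     (simp_all add: coeff_tmult_0 coeff_tmult_Suc sigma_mult delta_mult algebra_simps)

lemma degree_tmult_le: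
  assumes "degree p \<le> n"
  shows "degree (tmult p) \<le> Suc n"
proof (rule degree_le, intro allI impI)
  fix i assume "Suc n < i"
  then obtain j where "i = Suc j" "n < j" by (cases i) auto
  then show "coeff (tmult p) i = 0" using assms by (simp add: coeff_tmult_Suc coeff_eq_0)
qed

lemma degree_tmult_pow_le: "degree ((tmult ^^ i) p) \<le> degree p + i"
  by (induction i) (auto intro: degree_tmult_le)

lemma coeff_tmult_pow_top: "coeff ((tmult ^^ i) p) (degree p + i) = (\<sigma> ^^ i) (lead_coeff p)"
proof (induction i)
  case (Suc i)
  then show ?case
    using degree_tmult_pow_le[of i p] by (simp add: coeff_tmult_Suc coeff_eq_0)
qed simp

lemma skew_mult_eq_sum:
  "degree p \<le> N \<Longrightarrow> p \<star> q = (\<Sum>i\<le>N. const_lmult (coeff p i) ((tmult ^^ i) q))"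
  unfolding skew_mult_def by (rule sum.mono_neutral_left) (auto simp: coeff_eq_0)

lemma skew_mult_add_left: "(p + q) \<star> r = p \<star> r + q \<star> r"
proof -
  define N where "N = max (degree p) (degree q)"
  have "degree (p + q) \<le> N" "degree p \<le> N" "degree q \<le> N"
    by (auto simp: N_def degree_add_le)
  then show ?thesis
    by (simp add: skew_mult_eq_sum[of _ N] const_lmult_add_left sum.distrib)
qed

lemma skew_mult_zero_left [simp]: "0 \<star> q = 0"
  using skew_mult_add_left[of 0 0 q] by simp

lemma skew_mult_diff_left: "(p - q) \<star> r = p \<star> r - q \<star> r"
  using skew_mult_add_left[of "p - q" q r] by (simp add: eq_diff_eq)

lemma skew_mult_add_right: "p \<star> (q + r) = p \<star> q + p \<star> r"
  unfolding skew_mult_def by (simp add: tmult_pow_add const_lmult_add_right sum.distrib)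

lemma skew_mult_sum_left: "(\<Sum>x\<in>A. p x) \<star> r = (\<Sum>x\<in>A. p x \<star> r)"
  by (induction A rule: infinite_finite_induct) (auto simp: skew_mult_add_left)

lemma skew_mult_const_lmult_left: "const_lmult c p \<star> q = const_lmult c (p \<star> q)"
  using degree_const_lmult_le[of c p]
  by (simp add: skew_mult_eq_sum[of _ "degree p"] const_lmult_const_lmult const_lmult_sum_right)

lemma skew_mult_tmult_left: "tmult p \<star> q = tmult (p \<star> q)"
proof -
  let ?n = "degree p"
  let ?C = "\<lambda>i. const_lmult (\<delta> (coeff p i)) ((tmult ^^ i) q)"
  let ?S = "\<lambda>i. const_lmult (\<sigma> (coeff p i)) (tmult ((tmult ^^ i) q))"
  have "tmult p \<star> q = (\<Sum>i\<le>Suc ?n. const_lmult (coeff (tmult p) i) ((tmult ^^ i) q))"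
    by (rule skew_mult_eq_sum) (simp add: degree_tmult_le)
  also have "\<dots> = ?C 0 + (\<Sum>i\<le>?n. ?S i + ?C (Suc i))"
    by (subst sum.atMost_Suc_shift) (simp add: coeff_tmult_0 coeff_tmult_Suc const_lmult_add_left)
  also have "\<dots> = (\<Sum>i\<le>?n. ?S i) + (?C 0 + (\<Sum>i\<le>?n. ?C (Suc i)))"
    by (simp add: sum.distrib algebra_simps)
  also have "?C 0 + (\<Sum>i\<le>?n. ?C (Suc i)) = (\<Sum>i\<le>Suc ?n. ?C i)"
    by (subst sum.atMost_Suc_shift) simp
  also have "\<dots> = (\<Sum>i\<le>?n. ?C i)"
    by (simp add: coeff_eq_0)
  also have "(\<Sum>i\<le>?n. ?S i) + (\<Sum>i\<le>?n. ?C i) = (\<Sum>i\<le>?n. tmult (const_lmult (coeff p i) ((tmult ^^ i) q)))"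
    by (simp add: tmult_const_lmult sum.distrib)
  also have "\<dots> = tmult (p \<star> q)"
    unfolding skew_mult_def tmult_sum ..
  finally show ?thesis .
qed

lemma skew_mult_tmult_pow_left: "(tmult ^^ i) p \<star> q = (tmult ^^ i) (p \<star> q)"
  by (induction i) (auto simp: skew_mult_tmult_left)

lemma skew_mult_assoc: "(p \<star> q) \<star> r = p \<star> (q \<star> r)"
  unfolding skew_mult_def[of _ _ p q] skew_mult_def[of _ _ p "q \<star> r"]
  by (simp add: skew_mult_sum_left skew_mult_const_lmult_left skew_mult_tmult_pow_left)

lemma skew_mult_const_left: "[:c:] \<star> p = const_lmult c p"
  using skew_mult_eq_sum[of "[:c:]" 0 p] by simp

lemma skew_mult_one_left [simp]: "[:1:] \<star> p = p"
  by (simp add: skew_mult_const_left)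

lemma tmult_pow_one: "(tmult ^^ i) [:1:] = monom 1 i"
proof (induction i)
  case 0
  then show ?case by (simp add: monom_0)
next
  case (Suc i)
  have "tmult (monom 1 i) = monom 1 (Suc i)"
    by (rule poly_eqI, case_tac n) (auto simp: coeff_tmult_0 coeff_tmult_Suc)
  with Suc show ?case by simp
qed

lemma skew_mult_one_right [simp]: "p \<star> [:1:] = p"
  unfolding skew_mult_def tmult_pow_one const_lmult_monom by (simp add: poly_as_sum_of_monoms)

lemma skew_mult_const_const: "[:a:] \<star> [:b:] = [:a * b:]"
  by (simp add: skew_mult_const_left const_lmult_const)

lemma degree_skew_mult_le: "degree (p \<star> q) \<le> degree p + degree q"
proof (rule degree_le, intro allI impI)
  fix n assume n: "degree p + degree q < n"
  have "degree ((tmult ^^ i) q) < n" if "i \<le> degree p" for i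
    using degree_tmult_pow_le[of i q] n that by linarith
  then show "coeff (p \<star> q) n = 0"
    unfolding skew_mult_def coeff_sum by (simp add: coeff_eq_0)
qed

lemma coeff_skew_mult_top:
  "coeff (p \<star> q) (degree p + degree q) = lead_coeff p * (\<sigma> ^^ degree p) (lead_coeff q)"
proof -
  let ?D = "degree p + degree q"
  have "coeff p i * coeff ((tmult ^^ i) q) ?D =
      (if i = degree p then lead_coeff p * (\<sigma> ^^ degree p) (lead_coeff q) else 0)"
    if "i \<le> degree p" for i
  proof (cases "i = degree p")
    case True
    then show ?thesis using coeff_tmult_pow_top[of i q] by (simp add: add.commute)
  next
    case False
    then have "degree ((tmult ^^ i) q) < ?D"
      using degree_tmult_pow_le[of i q] that by linarith
    then show ?thesis using False by (simp add: coeff_eq_0)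
  qed
  then have "(\<Sum>i\<le>degree p. coeff p i * coeff ((tmult ^^ i) q) ?D) =
      (\<Sum>i\<le>degree p. if i = degree p then lead_coeff p * (\<sigma> ^^ degree p) (lead_coeff q) else 0)"
    by (intro sum.cong) auto
  then show ?thesis
    unfolding skew_mult_def coeff_sum by simp
qed

lemma
  assumes "p \<noteq> 0" "q \<noteq> 0"
  shows degree_skew_mult: "degree (p \<star> q) = degree p + degree q"
    and lead_coeff_skew_mult: "lead_coeff (p \<star> q) = lead_coeff p * (\<sigma> ^^ degree p) (lead_coeff q)"
proof -
  have "coeff (p \<star> q) (degree p + degree q) \<noteq> 0"
    using assms by (simp add: coeff_skew_mult_top)
  then have "degree p + degree q \<le> degree (p \<star> q)" by (rule le_degree)
  then show "degree (p \<star> q) = degree p + degree q"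
    using degree_skew_mult_le[of p q] by simp
  then show "lead_coeff (p \<star> q) = lead_coeff p * (\<sigma> ^^ degree p) (lead_coeff q)"
    by (simp add: coeff_skew_mult_top)
qed

lemma skew_division:
  assumes "lead_coeff g = 1" "0 < degree g"
  shows "\<exists>q r. p = q \<star> g + r \<and> degree r < degree g"
proof (induction "degree p" arbitrary: p rule: less_induct)
  case less
  show ?case
  proof (cases "degree p < degree g")
    case True
    then show ?thesis by (intro exI[of _ 0] exI[of _ p]) simp
  next
    case False
      define h where "h = monom (lead_coeff p) (degree p - degree g) \<star> g"
    have "p \<noteq> 0" "g \<noteq> 0" using False assms(2) by auto
    then have "monom (lead_coeff p) (degree p - degree g) \<noteq> 0" by simp
    from lead_coeff_skew_mult[OF this \<open>g \<noteq> 0\<close>] degree_skew_mult[OF this \<open>g \<noteq> 0\<close>]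
    have "degree h = degree p" "lead_coeff h = lead_coeff p"
      using False assms(1) \<open>p \<noteq> 0\<close> by (simp_all add: h_def degree_monom_eq)
    then have "degree (p - h) < degree p"
      using False assms(2) by (simp add: degree_diff_less_if_lead_coeff_eq)
    then obtain q r where "p - h = q \<star> g + r" "degree r < degree g"
      using less by blast
    then have "p = (monom (lead_coeff p) (degree p - degree g) + q) \<star> g + r"
      by (simp add: skew_mult_add_left h_def algebra_simps)
    then show ?thesis using \<open>degree r < degree g\<close> by blast
  qed
qed

definition skew_normalize :: "'a poly \<Rightarrow> 'a poly" where
  "skew_normalize g = [:inverse (lead_coeff g):] \<star> g"

lemma
  assumes "g \<noteq> 0"
  shows degree_skew_normalize: "degree (skew_normalize g) = degree g"
    and lead_coeff_skew_normalize: "lead_coeff (skew_normalize g) = 1"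
proof -
  have "[:inverse (lead_coeff g):] \<noteq> 0" using assms by simp
  then show "degree (skew_normalize g) = degree g" "lead_coeff (skew_normalize g) = 1"
    using degree_skew_mult[of "[:inverse (lead_coeff g):]" g] lead_coeff_skew_mult[of "[:inverse (lead_coeff g):]" g] assms
    by (simp_all add: skew_normalize_def)
qed

lemma left_ideal_monic_generator:
  assumes diff_closed: "\<And>p q. p \<in> L \<Longrightarrow> q \<in> L \<Longrightarrow> p - q \<in> L"
    and mult_closed: "\<And>s p. p \<in> L \<Longrightarrow> s \<star> p \<in> L"
    and "b \<in> L" "b \<noteq> 0"
  obtains g where "g \<in> L" "lead_coeff g = 1" "\<And>h. h \<in> L \<Longrightarrow> \<exists>s. h = s \<star> g"
proof -
  obtain g0 where "g0 \<in> L" "g0 \<noteq> 0" and minimal: "\<And>p. p \<in> L \<Longrightarrow> p \<noteq> 0 \<Longrightarrow> degree g0 \<le> degree p"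
    using ex_has_least_nat[of "\<lambda>p. p \<in> L \<and> p \<noteq> 0" b degree] assms(3,4) by auto
  define g where "g = skew_normalize g0"
  have "g \<in> L" using mult_closed[OF \<open>g0 \<in> L\<close>] by (simp add: g_def skew_normalize_def)
  have deg_g: "degree g = degree g0"
    using \<open>g0 \<noteq> 0\<close> by (simp add: g_def degree_skew_normalize)
  have monic_g: "lead_coeff g = 1"
    unfolding g_def using \<open>g0 \<noteq> 0\<close> by (rule lead_coeff_skew_normalize)
  have "\<exists>s. h = s \<star> g" if "h \<in> L" for h
  proof (cases "degree g = 0")
    case True
    with monic_g have "g = [:1:]" by (rule monic_degree_0)
    then show ?thesis by auto
  next
    case False
    obtain s r where sr: "h = s \<star> g + r" "degree r < degree g"
      using skew_division[OF monic_g] False by blast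
    then have "r = h - s \<star> g" by simp
    then have "r \<in> L" using diff_closed[OF \<open>h \<in> L\<close> mult_closed[OF \<open>g \<in> L\<close>]] by simp
    then have "r = 0" using minimal sr(2) deg_g by fastforce
    with sr(1) show ?thesis by auto
  qed
  with \<open>g \<in> L\<close> monic_g show thesis by (rule that)
qed

lemma division_ring_module_right_const:
  assumes "division_subring B"
  shows "division_ring_module B (\<lambda>c d. d * c) (\<lambda>c p. p \<star> [:c:])"
proof
  show "p \<star> [:c + d:] = p \<star> [:c:] + p \<star> [:d:]" for c d p
    using skew_mult_add_right[of p "[:c:]" "[:d:]"] by simp
  show "p \<star> [:d:] \<star> [:c:] = p \<star> [:d * c:]" for c d p
    by (simp add: skew_mult_assoc skew_mult_const_const)
qed (use assms in \<open>auto simp: division_subring_def skew_mult_add_left\<close>)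

text \<open>(tmult ^^ i) [:d:] is t^i d, so this writes p with its coefficients on the right.\<close>
lemma right_coefficients_exist:
  assumes "surj \<sigma>" "degree p \<le> N"
  shows "\<exists>d. p = (\<Sum>i\<le>N. (tmult ^^ i) [:d i:])"
  using assms(2)
proof (induction N arbitrary: p)
  case 0
  then obtain a where "p = [:a:]" by (auto elim: degree_eq_zeroE)
  then show ?case by (intro exI[of _ "\<lambda>_. a"]) simp
next
  case (Suc N)
  obtain c where c: "(\<sigma> ^^ Suc N) c = coeff p (Suc N)"
    using surj_fn[OF assms(1)] by (metis surjD)
  define p' where "p' = p - (tmult ^^ Suc N) [:c:]"
  have "degree p' \<le> N"
  proof (rule degree_le, intro allI impI)
    fix i assume "N < i"
    then consider "i = Suc N" | "Suc N < i" by linarith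
    then show "coeff p' i = 0"
    proof cases
      case 1
      then show ?thesis using c coeff_tmult_pow_top[of "Suc N" "[:c:]"] by (simp add: p'_def)
    next
      case 2
      then show ?thesis using degree_tmult_pow_le[of "Suc N" "[:c:]"] Suc.prems
        by (simp add: p'_def coeff_eq_0)
    qed
  qed
  then obtain d where "p' = (\<Sum>i\<le>N. (tmult ^^ i) [:d i:])" using Suc.IH by blast
  then have "p = (\<Sum>i\<le>N. (tmult ^^ i) [:(d(Suc N := c)) i:]) + (tmult ^^ Suc N) [:(d(Suc N := c)) (Suc N):]"
    by (simp add: p'_def diff_eq_eq)
  then show ?case unfolding sum.atMost_Suc by blast
qed

end

section \<open>The algebra S_f\<close>

locale skew_monic = skew_poly_ring +
  fixes f :: "'a poly"
  assumes monic: "lead_coeff f = 1" and degree_f_pos: "0 < degree f"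
begin

abbreviation rem :: "'a poly \<Rightarrow> 'a poly" where
  "rem p \<equiv> skew_rem \<sigma> \<delta> p f"

lemma f_nonzero: "f \<noteq> 0"
  using degree_f_pos by auto

lemma skew_rem_eq:
  assumes "p = q \<star> f + r" "degree r < degree f"
  shows "rem p = r"
  unfolding skew_rem_def
proof (rule the_equality)
  show "degree r < degree f \<and> (\<exists>q. p = q \<star> f + r)" using assms by blast
next
  fix r' assume "degree r' < degree f \<and> (\<exists>q. p = q \<star> f + r')"
  then obtain q' where q': "p = q' \<star> f + r'" "degree r' < degree f" by blast
  then have eq: "(q - q') \<star> f = r' - r"
    using assms(1) by (simp add: skew_mult_diff_left algebra_simps)
  show "r' = r"
  proof (rule ccontr)
    assume "r' \<noteq> r"
    then have "q - q' \<noteq> 0" using eq by auto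
    then have "degree f \<le> degree ((q - q') \<star> f)"
      using degree_skew_mult[OF _ f_nonzero] by simp
    moreover have "degree (r' - r) < degree f"
      using q'(2) assms(2) by (rule degree_diff_less)
    ultimately show False using eq by simp
  qed
qed

lemma
  shows skew_rem_decomp: "\<exists>q. p = q \<star> f + rem p"
    and degree_skew_rem: "degree (rem p) < degree f"
proof -
  obtain q r where "p = q \<star> f + r" "degree r < degree f"
    using skew_division[OF monic degree_f_pos] by blast
  moreover from this have "rem p = r" by (rule skew_rem_eq)
  ultimately show "\<exists>q. p = q \<star> f + rem p" "degree (rem p) < degree f" by auto
qed

lemma skew_rem_id: "degree p < degree f \<Longrightarrow> rem p = p"
  using skew_rem_eq[of p 0 p] by simp

lemma skew_rem_add: "rem (p + p') = rem p + rem p'"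
proof -
  obtain q q' where "p = q \<star> f + rem p" "p' = q' \<star> f + rem p'"
    using skew_rem_decomp by metis
  then have "p + p' = (q \<star> f + rem p) + (q' \<star> f + rem p')"
    by (rule arg_cong2[where f = "(+)"])
  also have "\<dots> = (q + q') \<star> f + (rem p + rem p')"
    by (simp add: skew_mult_add_left algebra_simps)
  finally have "p + p' = (q + q') \<star> f + (rem p + rem p')" .
  moreover have "degree (rem p + rem p') < degree f"
    using degree_skew_rem[of p] degree_skew_rem[of p'] by (rule degree_add_less)
  ultimately show ?thesis by (rule skew_rem_eq)
qed

lemma skew_rem_sum: "rem (\<Sum>i\<in>A. p i) = (\<Sum>i\<in>A. rem (p i))"
  by (induction A rule: infinite_finite_induct) (auto simp: skew_rem_add skew_rem_id degree_f_pos)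

lemma skew_rem_const_lmult: "rem (const_lmult c p) = const_lmult c (rem p)"
proof -
  obtain q where "p = q \<star> f + rem p" using skew_rem_decomp by metis
  then have "const_lmult c p = const_lmult c q \<star> f + const_lmult c (rem p)"
    by (metis const_lmult_add_right skew_mult_const_lmult_left)
  moreover have "degree (const_lmult c (rem p)) < degree f"
    using degree_const_lmult_le[of c "rem p"] degree_skew_rem[of p] by simp
  ultimately show ?thesis by (rule skew_rem_eq)
qed

lemma skew_rem_mult_f_add: "rem (q \<star> f + r) = rem r"
  using skew_rem_add[of "q \<star> f" r] skew_rem_eq[of "q \<star> f" q 0] degree_f_pos by simp

lemma left_bezout_irreducible:
  assumes "skew_irreducible \<sigma> \<delta> f" "b \<noteq> 0" "degree b < degree f"
  obtains u v where "u \<star> b + v \<star> f = [:1:]"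
proof -
  define L where "L = {x \<star> b + y \<star> f | x y. True}"
  have diff_closed: "p - q \<in> L" if p: "p \<in> L" and q: "q \<in> L" for p q
  proof -
    obtain x y x' y' where "p = x \<star> b + y \<star> f" "q = x' \<star> b + y' \<star> f"
      using p q unfolding L_def by blast
    then have "p - q = (x - x') \<star> b + (y - y') \<star> f"
      by (simp add: skew_mult_diff_left algebra_simps)
    then show ?thesis unfolding L_def by blast
  qed
  have mult_closed: "s \<star> p \<in> L" if p: "p \<in> L" for s p
  proof -
    obtain x y where "p = x \<star> b + y \<star> f" using p unfolding L_def by blast
    then have "s \<star> p = (s \<star> x) \<star> b + (s \<star> y) \<star> f"
      by (simp add: skew_mult_add_right skew_mult_assoc)
    then show ?thesis unfolding L_def by blast
  qed
  have "b \<in> L" unfolding L_def by (rule CollectI, rule exI[of _ "[:1:]"], rule exI[of _ 0]) simp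
  have "f \<in> L" unfolding L_def by (rule CollectI, rule exI[of _ 0], rule exI[of _ "[:1:]"]) simp
  obtain g where "g \<in> L" and monic_g: "lead_coeff g = 1" and divides: "\<And>h. h \<in> L \<Longrightarrow> \<exists>s. h = s \<star> g"
    using left_ideal_monic_generator[OF diff_closed mult_closed \<open>b \<in> L\<close> assms(2)] by blast
  obtain k h where k: "b = k \<star> g" and h: "f = h \<star> g"
    using divides \<open>b \<in> L\<close> \<open>f \<in> L\<close> by blast
  have "g \<noteq> 0" "k \<noteq> 0" "h \<noteq> 0"
    using monic_g k h assms(2) f_nonzero by auto
  then have deg: "degree b = degree k + degree g" "degree f = degree h + degree g"
    by (simp_all add: k h degree_skew_mult)
  then have "degree g < degree f" using assms(3) by linarith
  then have "\<not> degree h < degree f"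
    using assms(1) h unfolding skew_irreducible_def by blast
  with deg have "degree g = 0" by linarith
  with monic_g have "g = [:1:]" by (rule monic_degree_0)
  then obtain x y where "[:1:] = x \<star> b + y \<star> f" using \<open>g \<in> L\<close> unfolding L_def by blast
  then show thesis by (rule that[OF sym])
qed

text \<open>Write z = z (u b + v f) and reduce z u modulo g; since g b \<in> D[t]f, only the remainder, of
  degree < deg g, survives modulo f.\<close>
lemma span_rem_tmult_pow:
  assumes "u \<star> b + v \<star> f = [:1:]" "lead_coeff g = 1" "0 < degree g" "g \<star> b = q \<star> f"
    and "degree z < degree f"
  shows "z \<in> left_module.span {..<degree g} (\<lambda>j. rem ((tmult ^^ j) b))"
proof -
  obtain s r where sr: "z \<star> u = s \<star> g + r" "degree r < degree g"
    using skew_division[OF assms(2,3)] by blast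
  have "z = z \<star> (u \<star> b + v \<star> f)" by (simp add: assms(1))
  also have "\<dots> = (z \<star> u) \<star> b + (z \<star> v) \<star> f"
    by (simp add: skew_mult_add_right skew_mult_assoc)
  also have "\<dots> = (s \<star> q + z \<star> v) \<star> f + r \<star> b"
    by (simp add: sr(1) skew_mult_add_left skew_mult_assoc assms(4))
  finally have "z = rem (r \<star> b)"
    using skew_rem_mult_f_add skew_rem_id[OF assms(5)] by metis
  also have "r \<star> b = (\<Sum>j\<le>degree g - 1. const_lmult (coeff r j) ((tmult ^^ j) b))"
    using sr(2) by (intro skew_mult_eq_sum) linarith
  also have "{..degree g - 1} = {..<degree g}"
    using assms(3) by auto
  finally have "z = (\<Sum>j<degree g. const_lmult (coeff r j) (rem ((tmult ^^ j) b)))"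
    by (simp add: skew_rem_sum skew_rem_const_lmult)
  then show ?thesis by (simp add: left_module.spanI)
qed

lemma skew_rem_mult_nonzero:
  assumes "skew_irreducible \<sigma> \<delta> f"
    and "a \<noteq> 0" "degree a < degree f" and "b \<noteq> 0" "degree b < degree f"
  shows "rem (a \<star> b) \<noteq> 0"
proof
  assume "rem (a \<star> b) = 0"
  then obtain q where ab: "a \<star> b = q \<star> f"
    using skew_rem_decomp[of "a \<star> b"] by auto
  obtain u v where uv: "u \<star> b + v \<star> f = [:1:]"
    using left_bezout_irreducible assms(1,4,5) by blast
  define g where "g = skew_normalize a"
  have deg_g: "degree g = degree a"
    using assms(2) by (simp add: g_def degree_skew_normalize)
  have monic_g: "lead_coeff g = 1"
    unfolding g_def using assms(2) by (rule lead_coeff_skew_normalize)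
  have gb: "g \<star> b = ([:inverse (lead_coeff a):] \<star> q) \<star> f"
    by (simp add: g_def skew_normalize_def skew_mult_assoc ab)
  have "0 < degree g"
  proof (rule ccontr)
    assume "\<not> 0 < degree g"
    with monic_g have "g = [:1:]" by (simp add: monic_degree_0)
    then have "b = ([:inverse (lead_coeff a):] \<star> q) \<star> f" using gb by simp
    moreover from this have "[:inverse (lead_coeff a):] \<star> q \<noteq> 0" using assms(4) by auto
    ultimately have "degree f \<le> degree b"
      using degree_skew_mult f_nonzero by simp
    then show False using assms(5) by simp
  qed
  then have "{p. degree p < degree f} \<subseteq> left_module.span {..<degree g} (\<lambda>j. rem ((tmult ^^ j) b))"
    using span_rem_tmult_pow[OF uv monic_g _ gb] by blast
  moreover have "degree g < degree f" using deg_g assms(3) by simp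
  ultimately show False using degree_less_not_spanned by blast
qed

lemma Sf_mult_eq: "Sf_mult \<sigma> \<delta> f p q = rem (p \<star> q)"
  by (simp add: Sf_mult_def)

lemma Sf_mult_in_Sf: "Sf_mult \<sigma> \<delta> f p q \<in> Sf f"
  by (simp add: Sf_mult_eq Sf_def degree_skew_rem)

lemma left_module_subspace_Sf: "left_module.subspace (Sf f)"
  unfolding left_module.subspace_def Sf_def
  using degree_f_pos degree_const_lmult_le by (auto intro: degree_add_less le_less_trans)

lemma bij_Sf_mult_right:
  assumes "skew_irreducible \<sigma> \<delta> f" "a \<in> Sf f" "a \<noteq> 0"
  shows "bij_betw (\<lambda>x. Sf_mult \<sigma> \<delta> f x a) (Sf f) (Sf f)"
proof (rule left_module.injective_endomorphism_bij)
  show "(\<lambda>i. monom 1 i) ` {..<degree f} \<subseteq> Sf f"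
    by (auto simp: Sf_def degree_monom_eq)
  show "Sf f \<subseteq> left_module.span {..<degree f} (\<lambda>i. monom 1 i)"
    by (auto simp: Sf_def intro: left_module_span_monomials)
  show "left_module.linear_on (Sf f) (\<lambda>x. Sf_mult \<sigma> \<delta> f x a)"
    by (simp add: left_module.linear_on_def Sf_mult_eq skew_mult_add_left skew_rem_add
        skew_mult_const_lmult_left skew_rem_const_lmult)
  show "x = 0" if "x \<in> Sf f" "Sf_mult \<sigma> \<delta> f x a = 0" for x
    using skew_rem_mult_nonzero[OF assms(1), of x a] that assms(2,3) by (auto simp: Sf_def Sf_mult_eq)
qed (auto simp: left_module_subspace_Sf Sf_mult_in_Sf)

lemma right_module_subspace_Sf:
  assumes "division_subring B"
  shows "division_ring_module.subspace B (\<lambda>c p. p \<star> [:c:]) (Sf f)"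
proof -
  interpret right_module: division_ring_module B "\<lambda>c d. d * c" "\<lambda>c p. p \<star> [:c:]"
    using assms by (rule division_ring_module_right_const)
  show ?thesis
    unfolding right_module.subspace_def Sf_def
    using degree_f_pos degree_skew_mult_le[of _ "[:_:]"] by (auto intro: degree_add_less le_less_trans)
qed

lemma right_module_span_Sf:
  fixes n :: nat
  assumes "surj \<sigma>" "division_subring B"
    and B_spans: "\<And>d. \<exists>\<beta>. (\<forall>i<n. \<beta> i \<in> B) \<and> d = (\<Sum>i<n. e i * \<beta> i)"
  shows "Sf f \<subseteq> division_ring_module.span B (\<lambda>c p. p \<star> [:c:])
      ({..<degree f} \<times> {..<n}) (\<lambda>(i, j). (tmult ^^ i) [:e j:])"
proof
  interpret right_module: division_ring_module B "\<lambda>c d. d * c" "\<lambda>c p. p \<star> [:c:]"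
    using assms(2) by (rule division_ring_module_right_const)
  fix p assume "p \<in> Sf f"
  then have "degree p \<le> degree f - 1" by (simp add: Sf_def)
  then obtain d where "p = (\<Sum>i\<le>degree f - 1. (tmult ^^ i) [:d i:])"
    using right_coefficients_exist[OF assms(1)] by blast
  also have "{..degree f - 1} = {..<degree f}" using degree_f_pos by auto
  finally have p: "p = (\<Sum>i<degree f. (tmult ^^ i) [:d i:])" .
  have "\<forall>i. \<exists>\<gamma>. (\<forall>j<n. \<gamma> j \<in> B) \<and> d i = (\<Sum>j<n. e j * \<gamma> j)"
    using B_spans by blast
  then obtain \<beta> where \<beta>: "\<forall>i. (\<forall>j<n. \<beta> i j \<in> B) \<and> d i = (\<Sum>j<n. e j * \<beta> i j)"
    by (rule choice[elim_format]) blast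
  have "(tmult ^^ i) [:d i:] = (\<Sum>j<n. (tmult ^^ i) [:e j:] \<star> [:\<beta> i j:])" for i
    by (simp add: \<beta> sum_to_poly[symmetric] tmult_pow_sum skew_mult_tmult_pow_left skew_mult_const_const)
  then have "p = (\<Sum>x\<in>{..<degree f} \<times> {..<n}. (case x of (i, j) \<Rightarrow> (tmult ^^ i) [:e j:]) \<star> [:case_prod \<beta> x:])"
    by (simp add: p sum.cartesian_product split_def)
  also have "\<dots> \<in> right_module.span ({..<degree f} \<times> {..<n}) (\<lambda>(i, j). (tmult ^^ i) [:e j:])"
    by (rule right_module.spanI) (use \<beta> in auto)
  finally show "p \<in> division_ring_module.span B (\<lambda>c p. p \<star> [:c:])
      ({..<degree f} \<times> {..<n}) (\<lambda>(i, j). (tmult ^^ i) [:e j:])" .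
qed

lemma bij_Sf_mult_left:
  fixes n :: nat
  assumes "skew_irreducible \<sigma> \<delta> f" "surj \<sigma>" "division_subring B"
    and nuclear: "\<forall>b\<in>B. [:b:] \<in> Nuc_r \<sigma> \<delta> f"
    and B_spans: "\<And>d. \<exists>\<beta>. (\<forall>i<n. \<beta> i \<in> B) \<and> d = (\<Sum>i<n. e i * \<beta> i)"
    and "a \<in> Sf f" "a \<noteq> 0"
  shows "bij_betw (\<lambda>x. Sf_mult \<sigma> \<delta> f a x) (Sf f) (Sf f)"
proof -
  interpret right_module: division_ring_module B "\<lambda>c d. d * c" "\<lambda>c p. p \<star> [:c:]"
    using assms(3) by (rule division_ring_module_right_const)
  have Sf_mult_const: "Sf_mult \<sigma> \<delta> f p [:c:] = p \<star> [:c:]" if "p \<in> Sf f" for p c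
    using that degree_skew_mult_le[of p "[:c:]"] by (simp add: Sf_mult_eq Sf_def skew_rem_id)
  text \<open>The nucleus condition says precisely that left multiplication by a is right B-linear.\<close>
  have "right_module.linear_on (Sf f) (\<lambda>x. Sf_mult \<sigma> \<delta> f a x)"
    unfolding right_module.linear_on_def
  proof (intro conjI ballI)
    show "Sf_mult \<sigma> \<delta> f a (x + y) = Sf_mult \<sigma> \<delta> f a x + Sf_mult \<sigma> \<delta> f a y" for x y
      by (simp add: Sf_mult_eq skew_mult_add_right skew_rem_add)
    fix c x assume "c \<in> B" "x \<in> Sf f"
    then have "Sf_mult \<sigma> \<delta> f (Sf_mult \<sigma> \<delta> f a x) [:c:] = Sf_mult \<sigma> \<delta> f a (Sf_mult \<sigma> \<delta> f x [:c:])"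
      using nuclear assms(6) unfolding Nuc_r_def by blast
    then show "Sf_mult \<sigma> \<delta> f a (x \<star> [:c:]) = Sf_mult \<sigma> \<delta> f a x \<star> [:c:]"
      using Sf_mult_const \<open>x \<in> Sf f\<close> Sf_mult_in_Sf by simp
  qed
  moreover have "(\<lambda>(i, j). (tmult ^^ i) [:e j:]) ` ({..<degree f} \<times> {..<n}) \<subseteq> Sf f"
  proof -
    have "degree ((tmult ^^ i) [:e j:]) < degree f" if "i < degree f" for i j
      using degree_tmult_pow_le[of i "[:e j:]"] that by simp
    then show ?thesis by (auto simp: Sf_def)
  qed
  moreover have "x = 0" if "x \<in> Sf f" "Sf_mult \<sigma> \<delta> f a x = 0" for x
    using skew_rem_mult_nonzero[OF assms(1), of a x] that assms(6,7) by (auto simp: Sf_def Sf_mult_eq)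
  ultimately show ?thesis
    using right_module_subspace_Sf[OF assms(3)] right_module_span_Sf[OF assms(2,3) B_spans] Sf_mult_in_Sf
    by (intro right_module.injective_endomorphism_bij) auto
qed

lemma Sf_division_algebra_if_free_nuclear:
  assumes "skew_irreducible \<sigma> \<delta> f" "surj \<sigma>" "division_subring B"
    and "\<forall>b\<in>B. [:b:] \<in> Nuc_r \<sigma> \<delta> f" "free_finite_right_module B"
  shows "Sf_division_algebra \<sigma> \<delta> f"
proof -
  obtain n and e :: "nat \<Rightarrow> 'a" where "\<And>d. \<exists>\<beta>. (\<forall>i<n. \<beta> i \<in> B) \<and> d = (\<Sum>i<n. e i * \<beta> i)"
    using assms(5) unfolding free_finite_right_module_def by meson
  from bij_Sf_mult_left[OF assms(1-4) this] bij_Sf_mult_right[OF assms(1)] show ?thesis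
    unfolding Sf_division_algebra_def by blast
qed

end

theorem mainTheorem11:
  fixes \<sigma> \<delta> :: "'a::division_ring \<Rightarrow> 'a" and f :: "'a poly" and m :: nat
  assumes "is_automorphism \<sigma>"
    and "is_left_sigma_derivation \<sigma> \<delta>"
    and "lead_coeff f = 1" and "degree f = m" and "m \<ge> 2"
    and "skew_irreducible \<sigma> \<delta> f"
  shows "((\<forall>a. [:a:] \<in> Nuc_r \<sigma> \<delta> f) \<longrightarrow> Sf_division_algebra \<sigma> \<delta> f)
       \<and> (\<forall>B. is_subalgebra \<sigma> \<delta> B \<and> (\<forall>b\<in>B. [:b:] \<in> Nuc_r \<sigma> \<delta> f)
              \<and> free_finite_right_module B \<longrightarrow> Sf_division_algebra \<sigma> \<delta> f)"
proof -
  interpret skew_monic \<sigma> \<delta> f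
    using assms(1-5) by unfold_locales (auto simp: is_automorphism_def is_left_sigma_derivation_def)
  have "surj \<sigma>" using assms(1) by (simp add: is_automorphism_def bij_is_surj)
  note division = Sf_division_algebra_if_free_nuclear[OF assms(6) this]
  show ?thesis
  proof (intro conjI allI impI)
    assume "\<forall>a. [:a:] \<in> Nuc_r \<sigma> \<delta> f"
    then show "Sf_division_algebra \<sigma> \<delta> f"
      using division[of UNIV] free_finite_right_module_UNIV by (simp add: division_subring_def)
  next
    fix B assume B: "is_subalgebra \<sigma> \<delta> B \<and> (\<forall>b\<in>B. [:b:] \<in> Nuc_r \<sigma> \<delta> f) \<and> free_finite_right_module B"
    then have "division_subring B"
      unfolding is_subalgebra_def by (intro division_subring_if_free_finite_right_module) auto
    with B show "Sf_division_algebra \<sigma> \<delta> f" using division by blast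
  qed
qed

end
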